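(* Let $\mathcal{R}$ be a multiset rewriting (MSR) system over a fact signature satisfying the protocol format assumptions described in the context, with $n$ protocol roles, and let $\mathcal{R}_{\mathsf{intf}}$ be its interface model (constructed as in the context). Then every filtered trace of $\mathcal{R}_{\mathsf{intf}}$ is a filtered trace of $\mathcal{R}$, i.e. $\mathrm{Tr}'(\mathcal{R}_{\mathsf{intf}}) \subseteq \mathrm{Tr}'(\mathcal{R})$.
   Context: Terms and messages. Fix a finite signature $\Sigma$ of function symbols, a set of names $\mathcal{N} = \mathit{fresh} \cup \mathit{pub}$ (fresh names and countably many public names) and a set of variables $\mathcal{V}$; terms are $\mathcal{T} = \mathcal{T}_\Sigma(\mathcal{N}\cup\mathcal{V})$, messages $\mathcal{M}$ are ground terms. An equational theory $\mathsf{E}$ induces the equality $=_\mathsf{E}$ (the least congruence containing $\mathsf{E}$, closed under substitution). Facts and MSR. A fact signature $\Sigma_{\mathsf{facts}} = \Sigma_{\mathsf{lin}} \uplus \Sigma_{\mathsf{per}}$ of fact symbols is partitioned into linear and persistent symbols; facts are $F(t_1,\dots,t_k)$ with $F$ of arity $k$ and $t_j \in \mathcal{T}$, partitioned accordingly into $\mathcal{F}_{\mathsf{lin}}\uplus\mathcal{F}_{\mathsf{per}}$. An MSR rule $l \xrightarrow{a} r$ has multisets of facts $l,a,r$; an MSR system is a finite set of rules. Its semantics is an LTS whose states are multisets of ground facts, with initial state the empty multiset, and with transition $S \xrightarrow{a'} (S \setminus^{\#} (l' \cap^{\#} \mathcal{F}_{\mathsf{lin}})) \cup^{\#} r'$ whenever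 $l \xrightarrow{a} r$ is a rule, $\theta$ is a ground instantiation of its variables, $l' \xrightarrow{a'} r' =_\mathsf{E} (l\xrightarrow{a} r)\theta$, $l' \cap^{\#} \mathcal{F}_{\mathsf{lin}} \subseteq^{\#} S$ and $\mathrm{set}(l') \cap \mathcal{F}_{\mathsf{per}} \subseteq \mathrm{set}(S)$ (here $\cup^\#,\setminus^\#,\subseteq^\#,\cap^\#$ are multiset operations, and $M\cap^\# X$ keeps the elements of $M$ lying in the set $X$ with their multiplicities). $\mathrm{Tr}(\mathcal{R})$ is the set of label sequences $\langle a_1,\dots,a_m\rangle$ of finite executions from the empty state, and $\mathrm{Tr}'(\mathcal{R})$ is obtained from $\mathrm{Tr}(\mathcal{R})$ by deleting all empty labels from each sequence. Reserved symbols: $\mathsf{K}\in\Sigma_{\mathsf{per}}$ (attacker knowledge) and $\mathsf{Fr},\mathsf{in},\mathsf{out}\in\Sigma_{\mathsf{lin}}$ (freshness, input, output). Format assumptions. The fact signature has the form $\Sigma_{\mathsf{facts}} = \Sigma_{\mathsf{act}} \uplus \Sigma_{\mathsf{env}} \uplus \biguplus_{1\le i\le n} \Sigma^i_{\mathsf{state}}$ (action, environment and role-$i$ state fact symbols). $\Sigma_{\mathsf{env}}$ contains disjoint subsets $\Sigma_{\mathsf{in}}$ and $\Sigma_{\mathsf{out}}$ with $\mathsf{Fr},\mathsf{in}\in\Sigma_{\mathsf{in}}$, $\mathsf{out}\in\Sigma_{\mathsf{out}}$, $\mathsf{K}\in\Sigma_{\mathsf{env}}\setminus(\Sigma_{\mathsf{in}}\cup\Sigma_{\mathsf{out}})$,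 and for each role $i$ a setup symbol $\mathsf{Setup}_i\in\Sigma_{\mathsf{in}}$. The rules are $\mathcal{R} = \mathcal{R}_{\mathsf{env}} \uplus \biguplus_{1\le i\le n}\mathcal{R}_i$ (pairwise disjoint), where $\mathcal{R}_{\mathsf{env}}$ contains the attacker's message deduction rules and the freshness rule $[] \xrightarrow{[\mathsf{Fr}(x)]} [\mathsf{Fr}(x)]$ for $x$ of fresh type. All rule labels use only symbols from $\Sigma_{\mathsf{act}}$. Every rule of $\mathcal{R}_{\mathsf{env}}$ uses only symbols from $\Sigma_{\mathsf{env}}$ in its premises and conclusions; a rule producing a $\mathsf{Setup}_i$ fact lies in $\mathcal{R}_{\mathsf{env}}$, produces no other fact and has empty label (these are the role setup rules). Every rule $l\xrightarrow{a} r\in\mathcal{R}_i$ satisfies: the symbols of $l$ lie in $\Sigma^i_{\mathsf{state}}\cup\Sigma_{\mathsf{in}}$, those of $r$ lie in $\Sigma^i_{\mathsf{state}}\cup\Sigma_{\mathsf{out}}$, $r$ contains at least one state fact, and there is $k_i\ge 1$ such that the first $k_i$ arguments of all state facts and $\mathsf{Setup}_i$ facts in the rule coincide, the first of them being a thread identifier $\mathit{rid}$ of fresh type. Interface model. Let $\Sigma_{\mathsf{in}}^- = \Sigma_{\mathsf{in}}\setminus\{\mathsf{Setup}_1,\dots,\mathsf{Setup}_n\}$. For each $F\in\Sigma^-_{\mathsf{in}}\cup\Sigma_{\mathsf{out}}$ and each role $i$ add a new "buffer" symbol $F_i$ (with one more argument, of the same linearity as $F$). $\mathcal{R}'_i$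 is obtained from $\mathcal{R}_i$ by replacing in every rule each fact $F(t_1,\dots,t_k)$ with $F\in\Sigma^-_{\mathsf{in}}\cup\Sigma_{\mathsf{out}}$ by $F_i(\mathit{rid},t_1,\dots,t_k)$, where $\mathit{rid}$ is the rule's thread identifier. $\mathcal{R}_{\mathsf{io}}$ consists, for each role $i$, of the rules $[F(x_1,\dots,x_k)]\xrightarrow{[]}[F_i(\mathit{rid},x_1,\dots,x_k)]$ for $F\in\Sigma^-_{\mathsf{in}}$ and $[G_i(\mathit{rid},x_1,\dots,x_k)]\xrightarrow{[]}[G(x_1,\dots,x_k)]$ for $G\in\Sigma_{\mathsf{out}}$, together with all role setup rules, which are removed from $\mathcal{R}_{\mathsf{env}}$; the remaining environment rules form $\mathcal{R}^-_{\mathsf{env}}$. Finally $\mathcal{R}_{\mathsf{intf}} = \mathcal{R}^-_{\mathsf{env}}\uplus\mathcal{R}_{\mathsf{io}}\uplus\biguplus_i \mathcal{R}'_i$. *)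

theory Defs
  imports Main "HOL-Library.Multiset"
begin

datatype vsort = SFresh | SPub | SMsg

datatype ('f,'n,'v) trm = Var vsort 'v | FreshN 'n | PubN 'n | App 'f "('f,'n,'v) trm list"

type_synonym ('f,'n,'v) subst = "vsort \<Rightarrow> 'v \<Rightarrow> ('f,'n,'v) trm"

primrec subst :: "('f,'n,'v) subst \<Rightarrow> ('f,'n,'v) trm \<Rightarrow> ('f,'n,'v) trm" where
  "subst \<sigma> (Var s v) = \<sigma> s v"
| "subst \<sigma> (FreshN a) = FreshN a"
| "subst \<sigma> (PubN a) = PubN a"
| "subst \<sigma> (App f ts) = App f (map (subst \<sigma>) ts)"

primrec ground :: "('f,'n,'v) trm \<Rightarrow> bool" where
  "ground (Var s v) = False"
| "ground (FreshN a) = True"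
| "ground (PubN a) = True"
| "ground (App f ts) = list_all ground ts"

inductive eqE :: "(('f,'n,'v) trm \<times> ('f,'n,'v) trm) set \<Rightarrow> ('f,'n,'v) trm \<Rightarrow> ('f,'n,'v) trm \<Rightarrow> bool"
  for E where
  eqE_ax: "(s, t) \<in> E \<Longrightarrow> eqE E (subst \<sigma> s) (subst \<sigma> t)"
| eqE_refl: "eqE E t t"
| eqE_sym: "eqE E s t \<Longrightarrow> eqE E t s"
| eqE_trans: "eqE E s t \<Longrightarrow> eqE E t u \<Longrightarrow> eqE E s u"
| eqE_cong: "list_all2 (eqE E) ss ts \<Longrightarrow> eqE E (App f ss) (App f ts)"

definition ground_inst :: "('f,'n,'v) subst \<Rightarrow> bool" where
  "ground_inst \<theta> \<longleftrightarrow> (\<forall>s v. ground (\<theta> s v)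
      \<and> (s = SFresh \<longrightarrow> (\<exists>a. \<theta> s v = FreshN a))
      \<and> (s = SPub \<longrightarrow> (\<exists>a. \<theta> s v = PubN a)))"

datatype ('s,'f,'n,'v) fact = Fact (fsym: 's) (fargs: "('f,'n,'v) trm list")

datatype ('s,'f,'n,'v) rule =
  Rule (prems: "('s,'f,'n,'v) fact multiset") (acts: "('s,'f,'n,'v) fact multiset")
       (concs: "('s,'f,'n,'v) fact multiset")

definition ground_fact :: "('s,'f,'n,'v) fact \<Rightarrow> bool" where
  "ground_fact f \<longleftrightarrow> (\<forall>t\<in>set (fargs f). ground t)"

definition ground_mset :: "('s,'f,'n,'v) fact multiset \<Rightarrow> bool" where
  "ground_mset M \<longleftrightarrow> (\<forall>f\<in>#M. ground_fact f)"

definition subst_fact :: "('f,'n,'v) subst \<Rightarrow> ('s,'f,'n,'v) fact \<Rightarrow> ('s,'f,'n,'v) fact" where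
  "subst_fact \<theta> f = Fact (fsym f) (map (subst \<theta>) (fargs f))"

definition subst_mset :: "('f,'n,'v) subst \<Rightarrow> ('s,'f,'n,'v) fact multiset \<Rightarrow> ('s,'f,'n,'v) fact multiset" where
  "subst_mset \<theta> M = image_mset (subst_fact \<theta>) M"

definition eqE_fact :: "(('f,'n,'v) trm \<times> ('f,'n,'v) trm) set \<Rightarrow> ('s,'f,'n,'v) fact \<Rightarrow> ('s,'f,'n,'v) fact \<Rightarrow> bool" where
  "eqE_fact E f g \<longleftrightarrow> fsym f = fsym g \<and> list_all2 (eqE E) (fargs f) (fargs g)"

definition eqE_mset :: "(('f,'n,'v) trm \<times> ('f,'n,'v) trm) set \<Rightarrow> ('s,'f,'n,'v) fact multiset \<Rightarrow> ('s,'f,'n,'v) fact multiset \<Rightarrow> bool" where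
  "eqE_mset E M N \<longleftrightarrow> rel_mset (eqE_fact E) M N"

definition lin_part :: "('s \<Rightarrow> bool) \<Rightarrow> ('s,'f,'n,'v) fact multiset \<Rightarrow> ('s,'f,'n,'v) fact multiset" where
  "lin_part per M = filter_mset (\<lambda>f. \<not> per (fsym f)) M"

definition per_part :: "('s \<Rightarrow> bool) \<Rightarrow> ('s,'f,'n,'v) fact multiset \<Rightarrow> ('s,'f,'n,'v) fact multiset" where
  "per_part per M = filter_mset (\<lambda>f. per (fsym f)) M"

definition msr_step ::
  "('s \<Rightarrow> bool) \<Rightarrow> (('f,'n,'v) trm \<times> ('f,'n,'v) trm) set \<Rightarrow> ('s,'f,'n,'v) rule set
   \<Rightarrow> ('s,'f,'n,'v) fact multiset \<Rightarrow> ('s,'f,'n,'v) fact multiset \<Rightarrow> ('s,'f,'n,'v) fact multiset \<Rightarrow> bool" where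
  "msr_step per E R S a' S' \<longleftrightarrow>
     (\<exists>r\<in>R. \<exists>\<theta> l' r'. ground_inst \<theta> \<and>
        ground_mset l' \<and> ground_mset a' \<and> ground_mset r' \<and>
        eqE_mset E l' (subst_mset \<theta> (prems r)) \<and>
        eqE_mset E a' (subst_mset \<theta> (acts r)) \<and>
        eqE_mset E r' (subst_mset \<theta> (concs r)) \<and>
        lin_part per l' \<subseteq># S \<and>
        set_mset (per_part per l') \<subseteq> set_mset S \<and>
        S' = (S - lin_part per l') + r')"

inductive msr_run ::
  "('s \<Rightarrow> bool) \<Rightarrow> (('f,'n,'v) trm \<times> ('f,'n,'v) trm) set \<Rightarrow> ('s,'f,'n,'v) rule set
   \<Rightarrow> ('s,'f,'n,'v) fact multiset \<Rightarrow> ('s,'f,'n,'v) fact multiset list \<Rightarrow> bool"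
  for per E R where
  run_empty: "msr_run per E R {#} []"
| run_step: "msr_run per E R S tr \<Longrightarrow> msr_step per E R S a S' \<Longrightarrow> msr_run per E R S' (tr @ [a])"

definition Tr :: "('s \<Rightarrow> bool) \<Rightarrow> (('f,'n,'v) trm \<times> ('f,'n,'v) trm) set \<Rightarrow> ('s,'f,'n,'v) rule set
   \<Rightarrow> ('s,'f,'n,'v) fact multiset list set" where
  "Tr per E R = {tr. \<exists>S. msr_run per E R S tr}"

definition Tr' :: "('s \<Rightarrow> bool) \<Rightarrow> (('f,'n,'v) trm \<times> ('f,'n,'v) trm) set \<Rightarrow> ('s,'f,'n,'v) rule set
   \<Rightarrow> ('s,'f,'n,'v) fact multiset list set" where
  "Tr' per E R = (\<lambda>tr. filter (\<lambda>a. a \<noteq> {#}) tr) ` Tr per E R"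

record 's fsig =
  persistent :: "'s \<Rightarrow> bool"
  Sact :: "'s set"
  Senv :: "'s set"
  Sstate :: "nat \<Rightarrow> 's set"
  Sin :: "'s set"
  Sout :: "'s set"
  symK :: 's
  symFr :: 's
  symIn :: 's
  symOut :: 's
  symSetup :: "nat \<Rightarrow> 's"

definition syms :: "('s,'f,'n,'v) fact multiset \<Rightarrow> 's set" where
  "syms M = fsym ` set_mset M"

definition fresh_rule :: "'s \<Rightarrow> 'v \<Rightarrow> ('s,'f,'n,'v) rule" where
  "fresh_rule Fr x = Rule {#} {#Fact Fr [Var SFresh x]#} {#Fact Fr [Var SFresh x]#}"

definition is_fresh_rule :: "'s \<Rightarrow> ('s,'f,'n,'v) rule \<Rightarrow> bool" where
  "is_fresh_rule Fr r \<longleftrightarrow> (\<exists>x. r = fresh_rule Fr x)"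

definition produces_setup :: "'s fsig \<Rightarrow> nat \<Rightarrow> ('s,'f,'n,'v) rule \<Rightarrow> bool" where
  "produces_setup \<Sigma> n r \<longleftrightarrow> (\<exists>i\<in>{1..n}. symSetup \<Sigma> i \<in> syms (concs r))"

definition protocol_format ::
  "'s fsig \<Rightarrow> nat \<Rightarrow> ('s,'f,'n,'v) rule set \<Rightarrow> (nat \<Rightarrow> ('s,'f,'n,'v) rule set) \<Rightarrow> bool" where
  "protocol_format \<Sigma> n Renv Rrole \<longleftrightarrow>
    \<comment> \<open>the fact signature\<close>
    UNIV = Sact \<Sigma> \<union> Senv \<Sigma> \<union> (\<Union>i\<in>{1..n}. Sstate \<Sigma> i) \<and>
    Sact \<Sigma> \<inter> Senv \<Sigma> = {} \<and>
    (\<forall>i\<in>{1..n}. Sact \<Sigma> \<inter> Sstate \<Sigma> i = {} \<and> Senv \<Sigma> \<inter> Sstate \<Sigma> i = {}) \<and>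
    (\<forall>i\<in>{1..n}. \<forall>j\<in>{1..n}. i \<noteq> j \<longrightarrow> Sstate \<Sigma> i \<inter> Sstate \<Sigma> j = {}) \<and>
    Sin \<Sigma> \<subseteq> Senv \<Sigma> \<and> Sout \<Sigma> \<subseteq> Senv \<Sigma> \<and> Sin \<Sigma> \<inter> Sout \<Sigma> = {} \<and>
    symFr \<Sigma> \<in> Sin \<Sigma> \<and> symIn \<Sigma> \<in> Sin \<Sigma> \<and> symOut \<Sigma> \<in> Sout \<Sigma> \<and>
    symK \<Sigma> \<in> Senv \<Sigma> - (Sin \<Sigma> \<union> Sout \<Sigma>) \<and>
    persistent \<Sigma> (symK \<Sigma>) \<and> \<not> persistent \<Sigma> (symFr \<Sigma>) \<and>
    \<not> persistent \<Sigma> (symIn \<Sigma>) \<and> \<not> persistent \<Sigma> (symOut \<Sigma>) \<and>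
    inj_on (symSetup \<Sigma>) {1..n} \<and> symSetup \<Sigma> ` {1..n} \<subseteq> Sin \<Sigma> \<and>
    \<comment> \<open>the rules: finite, pairwise disjoint parts\<close>
    finite Renv \<and> (\<forall>i\<in>{1..n}. finite (Rrole i)) \<and>
    (\<forall>i\<in>{1..n}. Renv \<inter> Rrole i = {}) \<and>
    (\<forall>i\<in>{1..n}. \<forall>j\<in>{1..n}. i \<noteq> j \<longrightarrow> Rrole i \<inter> Rrole j = {}) \<and>
    \<comment> \<open>freshness rule\<close>
    (\<exists>x. fresh_rule (symFr \<Sigma>) x \<in> Renv) \<and>
    \<comment> \<open>labels use action symbols (the freshness rule, whose label is Fr(x), excepted)\<close>
    (\<forall>r \<in> Renv \<union> (\<Union>i\<in>{1..n}. Rrole i).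
        \<not> is_fresh_rule (symFr \<Sigma>) r \<longrightarrow> syms (acts r) \<subseteq> Sact \<Sigma>) \<and>
    \<comment> \<open>environment rules\<close>
    (\<forall>r\<in>Renv. syms (prems r) \<subseteq> Senv \<Sigma> \<and> syms (concs r) \<subseteq> Senv \<Sigma>) \<and>
    \<comment> \<open>setup rules\<close>
    (\<forall>r \<in> Renv \<union> (\<Union>i\<in>{1..n}. Rrole i). produces_setup \<Sigma> n r \<longrightarrow>
        r \<in> Renv \<and> size (concs r) = 1 \<and> acts r = {#}) \<and>
    \<comment> \<open>role rules\<close>
    (\<forall>i\<in>{1..n}. \<exists>k\<ge>1. \<forall>r\<in>Rrole i.
        syms (prems r) \<subseteq> Sstate \<Sigma> i \<union> Sin \<Sigma> \<and>
        syms (concs r) \<subseteq> Sstate \<Sigma> i \<union> Sout \<Sigma> \<and>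
        (\<exists>f\<in>#concs r. fsym f \<in> Sstate \<Sigma> i) \<and>
        (\<exists>ts rid. length ts = k \<and> ts ! 0 = Var SFresh rid \<and>
           (\<forall>f\<in>#prems r + concs r. fsym f \<in> Sstate \<Sigma> i \<union> {symSetup \<Sigma> i} \<longrightarrow>
               take k (fargs f) = ts)))"

datatype 's isym = Base 's | Buf 's nat

primrec ipersistent :: "('s \<Rightarrow> bool) \<Rightarrow> 's isym \<Rightarrow> bool" where
  "ipersistent per (Base F) = per F"
| "ipersistent per (Buf F i) = per F"

definition lift_fact :: "('s,'f,'n,'v) fact \<Rightarrow> ('s isym,'f,'n,'v) fact" where
  "lift_fact f = Fact (Base (fsym f)) (fargs f)"

definition lift_rule :: "('s,'f,'n,'v) rule \<Rightarrow> ('s isym,'f,'n,'v) rule" where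
  "lift_rule r = Rule (image_mset lift_fact (prems r)) (image_mset lift_fact (acts r))
                      (image_mset lift_fact (concs r))"

definition Sin_minus :: "'s fsig \<Rightarrow> nat \<Rightarrow> 's set" where
  "Sin_minus \<Sigma> n = Sin \<Sigma> - symSetup \<Sigma> ` {1..n}"

definition thread_id :: "'s fsig \<Rightarrow> nat \<Rightarrow> ('s,'f,'n,'v) rule \<Rightarrow> ('f,'n,'v) trm" where
  "thread_id \<Sigma> i r = hd (fargs (SOME f. f \<in># concs r \<and> fsym f \<in> Sstate \<Sigma> i))"

definition buf_fact :: "'s fsig \<Rightarrow> nat \<Rightarrow> nat \<Rightarrow> ('f,'n,'v) trm \<Rightarrow> ('s,'f,'n,'v) fact \<Rightarrow> ('s isym,'f,'n,'v) fact" where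
  "buf_fact \<Sigma> n i rid f =
     (if fsym f \<in> Sin_minus \<Sigma> n \<union> Sout \<Sigma> then Fact (Buf (fsym f) i) (rid # fargs f)
      else lift_fact f)"

definition buf_rule :: "'s fsig \<Rightarrow> nat \<Rightarrow> nat \<Rightarrow> ('s,'f,'n,'v) rule \<Rightarrow> ('s isym,'f,'n,'v) rule" where
  "buf_rule \<Sigma> n i r =
     (let rid = thread_id \<Sigma> i r in
      Rule (image_mset (buf_fact \<Sigma> n i rid) (prems r)) (image_mset (buf_fact \<Sigma> n i rid) (acts r))
           (image_mset (buf_fact \<Sigma> n i rid) (concs r)))"

definition Rrole_intf :: "'s fsig \<Rightarrow> nat \<Rightarrow> (nat \<Rightarrow> ('s,'f,'n,'v) rule set) \<Rightarrow> nat \<Rightarrow> ('s isym,'f,'n,'v) rule set" where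
  "Rrole_intf \<Sigma> n Rrole i = buf_rule \<Sigma> n i ` Rrole i"

definition io_rules :: "'s fsig \<Rightarrow> nat \<Rightarrow> nat \<Rightarrow> ('s isym,'f,'n,'v) rule set" where
  "io_rules \<Sigma> n i =
     {Rule {#Fact (Base F) (map (Var SMsg) xs)#} {#} {#Fact (Buf F i) (Var SFresh rid # map (Var SMsg) xs)#}
        | F xs rid. F \<in> Sin_minus \<Sigma> n \<and> distinct xs}
   \<union> {Rule {#Fact (Buf G i) (Var SFresh rid # map (Var SMsg) xs)#} {#} {#Fact (Base G) (map (Var SMsg) xs)#}
        | G xs rid. G \<in> Sout \<Sigma> \<and> distinct xs}"

definition setup_rules :: "'s fsig \<Rightarrow> nat \<Rightarrow> ('s,'f,'n,'v) rule set \<Rightarrow> ('s,'f,'n,'v) rule set" where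
  "setup_rules \<Sigma> n Renv = {r\<in>Renv. produces_setup \<Sigma> n r}"

definition R_io :: "'s fsig \<Rightarrow> nat \<Rightarrow> ('s,'f,'n,'v) rule set \<Rightarrow> ('s isym,'f,'n,'v) rule set" where
  "R_io \<Sigma> n Renv = (\<Union>i\<in>{1..n}. io_rules \<Sigma> n i) \<union> lift_rule ` setup_rules \<Sigma> n Renv"

definition R_intf :: "'s fsig \<Rightarrow> nat \<Rightarrow> ('s,'f,'n,'v) rule set \<Rightarrow> (nat \<Rightarrow> ('s,'f,'n,'v) rule set) \<Rightarrow> ('s isym,'f,'n,'v) rule set" where
  "R_intf \<Sigma> n Renv Rrole =
     lift_rule ` (Renv - setup_rules \<Sigma> n Renv) \<union> R_io \<Sigma> n Renv \<union> (\<Union>i\<in>{1..n}. Rrole_intf \<Sigma> n Rrole i)"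

definition R_orig :: "nat \<Rightarrow> ('s,'f,'n,'v) rule set \<Rightarrow> (nat \<Rightarrow> ('s,'f,'n,'v) rule set) \<Rightarrow> ('s,'f,'n,'v) rule set" where
  "R_orig n Renv Rrole = Renv \<union> (\<Union>i\<in>{1..n}. Rrole i)"

end

theory Submission imports Defs begin

(* Every state S of the interface model is mapped to a state of R: each buffered fact
   F_i(rid, t) is turned back into F(t), and every fact is replaced by a canonical ground
   representative of its E-class. The canonical choice is needed because a buffer rule may
   replace a fact by an E-equal but syntactically different one. Under this abstraction a
   buffered role rule, or a lifted environment rule, becomes an instance of the original rule
   with the same label, while a buffer rule (empty label) only re-adds a fact that is already
   present. Persistent facts never disappear, so the simulation only has to preserve the linear
   part of the state exactly and the persistent part as a set. *)

lemma eqE_fact_refl: "eqE_fact E f f"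
  by (simp add: eqE_fact_def list_all2_refl eqE_refl)

lemma eqE_fact_sym: "eqE_fact E f g \<Longrightarrow> eqE_fact E g f"
  unfolding eqE_fact_def by (auto simp: list_all2_conv_all_nth intro: eqE_sym)

lemma eqE_fact_trans: "eqE_fact E f g \<Longrightarrow> eqE_fact E g h \<Longrightarrow> eqE_fact E f h"
  unfolding eqE_fact_def using list_all2_trans[of "eqE E" "eqE E" "eqE E", OF eqE_trans] by auto

lemma eqE_mset_singleton: "eqE_mset E M {#x#} \<Longrightarrow> \<exists>f. M = {#f#} \<and> eqE_fact E f x"
  unfolding eqE_mset_def by (drule msed_rel_invR) auto

definition canon_fact ::
  "(('f,'n,'v) trm \<times> ('f,'n,'v) trm) set \<Rightarrow> ('s,'f,'n,'v) fact \<Rightarrow> ('s,'f,'n,'v) fact" where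
  "canon_fact E f =
     (if \<exists>g. ground_fact g \<and> eqE_fact E g f then SOME g. ground_fact g \<and> eqE_fact E g f else f)"

lemma eqE_fact_canon_fact: "eqE_fact E (canon_fact E f) f"
  unfolding canon_fact_def by (auto intro: someI2_ex eqE_fact_refl)

lemma fsym_canon_fact [simp]: "fsym (canon_fact E f) = fsym f"
  using eqE_fact_canon_fact by (metis eqE_fact_def)

lemma ground_canon_fact: "ground_fact f \<Longrightarrow> ground_fact (canon_fact E f)"
  unfolding canon_fact_def by (auto intro: someI2_ex eqE_fact_refl)

lemma canon_fact_cong:
  assumes "eqE_fact E f f'" and "ground_fact f"
  shows "canon_fact E f = canon_fact E f'"
proof -
  have "(\<lambda>g. ground_fact g \<and> eqE_fact E g f) = (\<lambda>g. ground_fact g \<and> eqE_fact E g f')"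
    using assms(1) by (auto intro: eqE_fact_trans eqE_fact_sym)
  moreover have "\<exists>g. ground_fact g \<and> eqE_fact E g f"
    using assms(2) eqE_fact_refl by blast
  ultimately show ?thesis unfolding canon_fact_def by simp
qed

definition unbuf_fact :: "('s isym,'f,'n,'v) fact \<Rightarrow> ('s,'f,'n,'v) fact" where
  "unbuf_fact f = (case fsym f of Base F \<Rightarrow> Fact F (fargs f) | Buf F i \<Rightarrow> Fact F (tl (fargs f)))"

lemma eqE_fact_unbuf_fact: "eqE_fact E f g \<Longrightarrow> eqE_fact E (unbuf_fact f) (unbuf_fact g)"
proof -
  assume "eqE_fact E f g"
  then have "fsym f = fsym g" and args: "list_all2 (eqE E) (fargs f) (fargs g)"
    by (auto simp: eqE_fact_def)
  moreover have "list_all2 (eqE E) (tl (fargs f)) (tl (fargs g))"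
    using args by (cases "fargs f"; cases "fargs g") auto
  ultimately show ?thesis unfolding eqE_fact_def unbuf_fact_def by (auto split: isym.splits)
qed

lemma ground_unbuf_fact: "ground_fact f \<Longrightarrow> ground_fact (unbuf_fact f)"
  unfolding ground_fact_def unbuf_fact_def by (cases "fargs f") (auto split: isym.splits)

lemma persistent_unbuf_fact: "per (fsym (unbuf_fact f)) = ipersistent per (fsym f)"
  unfolding unbuf_fact_def by (auto split: isym.splits)

definition abs_fact ::
  "(('f,'n,'v) trm \<times> ('f,'n,'v) trm) set \<Rightarrow> ('s isym,'f,'n,'v) fact \<Rightarrow> ('s,'f,'n,'v) fact" where
  "abs_fact E f = canon_fact E (unbuf_fact f)"

definition abs_state :: "(('f,'n,'v) trm \<times> ('f,'n,'v) trm) set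
    \<Rightarrow> ('s isym,'f,'n,'v) fact multiset \<Rightarrow> ('s,'f,'n,'v) fact multiset" where
  "abs_state E M = image_mset (abs_fact E) M"

lemma lin_part_plus [simp]: "lin_part p (M + N) = lin_part p M + lin_part p N"
  unfolding lin_part_def by simp

lemma lin_part_minus [simp]: "lin_part p (M - N) = lin_part p M - lin_part p N"
  unfolding lin_part_def by simp

lemma lin_part_lin_part [simp]: "lin_part p (lin_part p M) = lin_part p M"
  unfolding lin_part_def by (simp add: filter_filter_mset)

lemma per_part_plus [simp]: "per_part p (M + N) = per_part p M + per_part p N"
  unfolding per_part_def by simp

lemma per_part_minus [simp]: "per_part p (M - N) = per_part p M - per_part p N"
  unfolding per_part_def by simp

lemma per_part_lin_part [simp]: "per_part p (lin_part p M) = {#}"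
  unfolding lin_part_def per_part_def by (simp add: filter_filter_mset)

lemma lin_part_mono: "M \<subseteq># N \<Longrightarrow> lin_part p M \<subseteq># lin_part p N"
  unfolding lin_part_def by (rule multiset_filter_mono)

lemma lin_part_abs_state: "lin_part per (abs_state E M) = abs_state E (lin_part (ipersistent per) M)"
  unfolding lin_part_def abs_state_def abs_fact_def filter_mset_image_mset
  by (simp add: persistent_unbuf_fact)

lemma per_part_abs_state: "per_part per (abs_state E M) = abs_state E (per_part (ipersistent per) M)"
  unfolding per_part_def abs_state_def abs_fact_def filter_mset_image_mset
  by (simp add: persistent_unbuf_fact)

lemma ground_abs_state: "ground_mset M \<Longrightarrow> ground_mset (abs_state E M)"
  unfolding ground_mset_def abs_state_def abs_fact_def
  by (auto intro: ground_canon_fact ground_unbuf_fact)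

lemma ground_mset_step: "ground_mset S \<Longrightarrow> ground_mset r \<Longrightarrow> ground_mset (S - l + r)"
  unfolding ground_mset_def by (auto dest: in_diffD)

lemma abs_state_step:
  assumes "lin_part (ipersistent per) l \<subseteq># S"
  shows "abs_state E (S - lin_part (ipersistent per) l + r)
           = abs_state E S - lin_part per (abs_state E l) + abs_state E r"
  unfolding lin_part_abs_state by (simp only: abs_state_def image_mset_union image_mset_Diff[OF assms])

definition enabled ::
  "('s \<Rightarrow> bool) \<Rightarrow> ('s,'f,'n,'v) fact multiset \<Rightarrow> ('s,'f,'n,'v) fact multiset \<Rightarrow> bool" where
  "enabled per l S \<longleftrightarrow> lin_part per l \<subseteq># S \<and> set_mset (per_part per l) \<subseteq> set_mset S"

lemma enabled_abs_state:
  assumes "enabled (ipersistent per) l S"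
  shows "enabled per (abs_state E l) (abs_state E S)"
proof -
  have "lin_part per (abs_state E l) = abs_state E (lin_part (ipersistent per) l)"
    by (rule lin_part_abs_state)
  also have "\<dots> \<subseteq># abs_state E S"
    using assms unfolding enabled_def abs_state_def by (blast intro: image_mset_subseteq_mono)
  finally have "lin_part per (abs_state E l) \<subseteq># abs_state E S" .
  moreover have "set_mset (per_part per (abs_state E l)) \<subseteq> set_mset (abs_state E S)"
    using assms unfolding enabled_def per_part_abs_state unfolding abs_state_def by auto
  ultimately show ?thesis unfolding enabled_def ..
qed

(* No MSR step can tell apart two states related in this way. *)
definition equal_upto_persistent ::
  "('s \<Rightarrow> bool) \<Rightarrow> ('s,'f,'n,'v) fact multiset \<Rightarrow> ('s,'f,'n,'v) fact multiset \<Rightarrow> bool" where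
  "equal_upto_persistent per A B \<longleftrightarrow>
     lin_part per A = lin_part per B \<and> set_mset (per_part per A) = set_mset (per_part per B)"

lemma enabled_equal_upto_persistent:
  assumes eq: "equal_upto_persistent per A B" and en: "enabled per l B"
  shows "enabled per l A"
proof -
  have "lin_part per l = lin_part per (lin_part per l)" by simp
  also have "\<dots> \<subseteq># lin_part per B"
    using en unfolding enabled_def by (rule conjE) (rule lin_part_mono)
  finally have "lin_part per l \<subseteq># A"
    using eq unfolding equal_upto_persistent_def lin_part_def
    by (metis multiset_filter_subset subset_mset.order_trans)
  moreover have "set_mset (per_part per l) \<subseteq> set_mset A"
    using eq en unfolding equal_upto_persistent_def enabled_def per_part_def by auto
  ultimately show ?thesis unfolding enabled_def ..
qed

lemma equal_upto_persistent_step: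
  "equal_upto_persistent per A B
     \<Longrightarrow> equal_upto_persistent per (A - lin_part per l + r) (B - lin_part per l + r)"
  unfolding equal_upto_persistent_def by simp

lemma equal_upto_persistent_readd:
  "c \<in># B \<Longrightarrow> equal_upto_persistent per (B - lin_part per {#c#} + {#c#}) B"
  by (cases "per (fsym c)") (auto simp: equal_upto_persistent_def lin_part_def per_part_def)

definition sim_state :: "('s \<Rightarrow> bool) \<Rightarrow> (('f,'n,'v) trm \<times> ('f,'n,'v) trm) set
    \<Rightarrow> ('s isym,'f,'n,'v) fact multiset \<Rightarrow> ('s,'f,'n,'v) fact multiset \<Rightarrow> bool" where
  "sim_state per E S So \<longleftrightarrow> ground_mset S \<and> equal_upto_persistent per So (abs_state E S)"

lemma msr_step_singleton_iff: "msr_step per E R S a S' \<longleftrightarrow> (\<exists>r\<in>R. msr_step per E {r} S a S')"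
  unfolding msr_step_def by blast

definition unbuf_inverse :: "(('s,'f,'n,'v) fact \<Rightarrow> ('s isym,'f,'n,'v) fact) \<Rightarrow> bool" where
  "unbuf_inverse h \<longleftrightarrow> (\<forall>\<theta> f. unbuf_fact (subst_fact \<theta> (h f)) = subst_fact \<theta> f)"

lemma unbuf_inverse_lift_fact: "unbuf_inverse lift_fact"
  by (simp add: unbuf_inverse_def unbuf_fact_def lift_fact_def subst_fact_def)

lemma unbuf_inverse_buf_fact: "unbuf_inverse (buf_fact \<Sigma> n i rid)"
  by (simp add: unbuf_inverse_def unbuf_fact_def lift_fact_def subst_fact_def buf_fact_def)

lemma eqE_mset_unbuf:
  assumes h: "unbuf_inverse h" and eq: "eqE_mset E M (subst_mset \<theta> (image_mset h P))"
  shows "eqE_mset E (image_mset unbuf_fact M) (subst_mset \<theta> P)"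
proof -
  have "rel_mset (\<lambda>x y. eqE_fact E x (subst_fact \<theta> (h y))) M P"
    using eq by (simp add: eqE_mset_def subst_mset_def multiset.rel_map)
  then have "rel_mset (\<lambda>x y. eqE_fact E (unbuf_fact x) (subst_fact \<theta> y)) M P"
    by (rule multiset.rel_mono_strong) (metis eqE_fact_unbuf_fact h unbuf_inverse_def)
  then show ?thesis by (simp add: eqE_mset_def subst_mset_def multiset.rel_map)
qed

lemma eqE_mset_abs_state:
  assumes "unbuf_inverse h" and "eqE_mset E M (subst_mset \<theta> (image_mset h P))"
  shows "eqE_mset E (abs_state E M) (subst_mset \<theta> P)"
proof -
  have "rel_mset (eqE_fact E) (image_mset unbuf_fact M) (subst_mset \<theta> P)"
    using eqE_mset_unbuf[OF assms] by (simp add: eqE_mset_def)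
  then have "rel_mset (\<lambda>x y. eqE_fact E (canon_fact E x) y) (image_mset unbuf_fact M) (subst_mset \<theta> P)"
    by (rule multiset.rel_mono_strong) (blast intro: eqE_fact_trans eqE_fact_canon_fact)
  then show ?thesis
    by (simp add: eqE_mset_def abs_state_def abs_fact_def multiset.rel_map image_mset.compositionality)
qed

lemma lift_unbuf_acts:
  assumes "eqE_mset E a (subst_mset \<theta> (image_mset lift_fact P))"
  shows "image_mset lift_fact (image_mset unbuf_fact a) = a"
proof -
  have "rel_mset (\<lambda>x y. eqE_fact E x (subst_fact \<theta> (lift_fact y))) a P"
    using assms by (simp add: eqE_mset_def subst_mset_def multiset.rel_map)
  then have "rel_mset (\<lambda>x y. lift_fact (unbuf_fact x) = x) a P"
    by (rule multiset.rel_mono_strong)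
      (auto simp: eqE_fact_def subst_fact_def lift_fact_def unbuf_fact_def intro: fact.expand)
  then have "\<forall>f\<in>#a. lift_fact (unbuf_fact f) = f"
    unfolding multiset.in_rel by force
  then show ?thesis by (simp add: image_mset.compositionality cong: image_mset_cong)
qed

definition translates ::
  "(('s,'f,'n,'v) fact \<Rightarrow> ('s isym,'f,'n,'v) fact)
     \<Rightarrow> ('s,'f,'n,'v) rule \<Rightarrow> ('s isym,'f,'n,'v) rule \<Rightarrow> bool" where
  "translates h r0 r \<longleftrightarrow> unbuf_inverse h \<and> prems r = image_mset h (prems r0)
     \<and> acts r = image_mset lift_fact (acts r0) \<and> concs r = image_mset h (concs r0)"

definition forwarding_rule :: "('s isym,'f,'n,'v) rule \<Rightarrow> bool" where
  "forwarding_rule r \<longleftrightarrow> acts r = {#} \<and> (\<exists>p q. prems r = {#p#} \<and> concs r = {#q#}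
     \<and> (\<forall>\<theta>. unbuf_fact (subst_fact \<theta> p) = unbuf_fact (subst_fact \<theta> q)))"

lemma translated_step_simulation:
  assumes tr: "translates h r0 r" and step: "msr_step (ipersistent per) E {r} S a S'"
    and sim: "sim_state per E S So"
  shows "\<exists>So'. msr_step per E {r0} So (image_mset unbuf_fact a) So' \<and> sim_state per E S' So'
           \<and> image_mset lift_fact (image_mset unbuf_fact a) = a"
proof -
  have h: "unbuf_inverse h" using tr by (simp add: translates_def)
  obtain \<theta> l' r' where gi: "ground_inst \<theta>" and gl: "ground_mset l'" and ga: "ground_mset a"
    and gr: "ground_mset r'"
    and el: "eqE_mset E l' (subst_mset \<theta> (image_mset h (prems r0)))"
    and ea: "eqE_mset E a (subst_mset \<theta> (image_mset lift_fact (acts r0)))"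
    and er: "eqE_mset E r' (subst_mset \<theta> (image_mset h (concs r0)))"
    and en: "enabled (ipersistent per) l' S"
    and S': "S' = S - lin_part (ipersistent per) l' + r'"
    using step tr unfolding msr_step_def translates_def enabled_def by auto
  define So' where "So' = So - lin_part per (abs_state E l') + abs_state E r'"
  have "enabled per (abs_state E l') So"
    using sim enabled_abs_state[OF en] enabled_equal_upto_persistent
    unfolding sim_state_def by blast
  moreover have "ground_mset (image_mset unbuf_fact a)"
    using ga unfolding ground_mset_def by (auto intro: ground_unbuf_fact)
  moreover note ground_abs_state[OF gl] ground_abs_state[OF gr]
    eqE_mset_abs_state[OF h el] eqE_mset_abs_state[OF h er]
    eqE_mset_unbuf[OF unbuf_inverse_lift_fact ea]
  ultimately have "msr_step per E {r0} So (image_mset unbuf_fact a) So'"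
    unfolding msr_step_def enabled_def So'_def using gi by blast
  moreover have "sim_state per E S' So'"
  proof -
    have "abs_state E S' = abs_state E S - lin_part per (abs_state E l') + abs_state E r'"
      using en S' abs_state_step unfolding enabled_def by blast
    then show ?thesis
      using sim gr S' equal_upto_persistent_step ground_mset_step
      unfolding sim_state_def So'_def by metis
  qed
  ultimately show ?thesis using lift_unbuf_acts[OF ea] by blast
qed

lemma forwarding_step_stutters:
  assumes fw: "forwarding_rule r" and step: "msr_step (ipersistent per) E {r} S a S'"
    and sim: "sim_state per E S So"
  shows "a = {#} \<and> sim_state per E S' So"
proof -
  obtain p q where r: "acts r = {#}" "prems r = {#p#}" "concs r = {#q#}"
    and pq: "\<And>\<theta>. unbuf_fact (subst_fact \<theta> p) = unbuf_fact (subst_fact \<theta> q)"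
    using fw unfolding forwarding_rule_def by blast
  obtain \<theta> l' r' where gr: "ground_mset r'"
    and el: "eqE_mset E l' {#subst_fact \<theta> p#}" and ea: "eqE_mset E a {#}"
    and er: "eqE_mset E r' {#subst_fact \<theta> q#}"
    and en: "enabled (ipersistent per) l' S"
    and S': "S' = S - lin_part (ipersistent per) l' + r'"
    using step r unfolding msr_step_def enabled_def by (auto simp: subst_mset_def)
  obtain f g where fg: "l' = {#f#}" "r' = {#g#}"
    and ef: "eqE_fact E f (subst_fact \<theta> p)" and eg: "eqE_fact E g (subst_fact \<theta> q)"
    using eqE_mset_singleton[OF el] eqE_mset_singleton[OF er] by blast
  have f: "f \<in># S"
    using en fg by (cases "ipersistent per (fsym f)") (auto simp: enabled_def lin_part_def per_part_def)
  then have "ground_fact (unbuf_fact f)"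
    using sim by (auto simp: sim_state_def ground_mset_def intro: ground_unbuf_fact)
  moreover have "eqE_fact E (unbuf_fact f) (unbuf_fact g)"
    using eqE_fact_unbuf_fact[OF ef] eqE_fact_unbuf_fact[OF eg] pq
    by (metis eqE_fact_sym eqE_fact_trans)
  ultimately have "abs_fact E g = abs_fact E f"
    unfolding abs_fact_def by (metis canon_fact_cong)
  moreover have "abs_state E S' = abs_state E S - lin_part per (abs_state E l') + abs_state E r'"
    using abs_state_step en S' unfolding enabled_def by blast
  ultimately have "abs_state E S' = abs_state E S - lin_part per {#abs_fact E f#} + {#abs_fact E f#}"
    using fg by (simp add: abs_state_def)
  moreover have "abs_fact E f \<in># abs_state E S"
    using f by (simp add: abs_state_def)
  ultimately have "equal_upto_persistent per (abs_state E S') (abs_state E S)"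
    using equal_upto_persistent_readd by metis
  then have "sim_state per E S' So"
    using sim gr S' ground_mset_step unfolding sim_state_def equal_upto_persistent_def by metis
  moreover have "a = {#}"
    using ea by (simp add: eqE_mset_def)
  ultimately show ?thesis by blast
qed

lemma run_simulation:
  assumes rules: "\<forall>r\<in>R'. (\<exists>r0\<in>R. \<exists>h. translates h r0 r) \<or> forwarding_rule r"
    and run: "msr_run (ipersistent per) E R' S tr"
  shows "\<exists>So tro. msr_run per E R So tro \<and> sim_state per E S So
           \<and> filter (\<lambda>a. a \<noteq> {#}) tr = map (image_mset lift_fact) (filter (\<lambda>a. a \<noteq> {#}) tro)"
  using run
proof (induction rule: msr_run.induct)
  case run_empty
  have "sim_state per E {#} {#}"
    by (simp add: sim_state_def equal_upto_persistent_def abs_state_def ground_mset_def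
        lin_part_def per_part_def)
  then show ?case by (intro exI[of _ "{#}"] exI[of _ "[]"]) (simp add: msr_run.run_empty)
next
  case (run_step S tr a S')
  then obtain So tro where run: "msr_run per E R So tro" and sim: "sim_state per E S So"
    and trace: "filter (\<lambda>a. a \<noteq> {#}) tr = map (image_mset lift_fact) (filter (\<lambda>a. a \<noteq> {#}) tro)"
    by blast
  obtain r where "r \<in> R'" and step: "msr_step (ipersistent per) E {r} S a S'"
    using msr_step_singleton_iff[THEN iffD1, OF run_step.hyps(2)] by blast
  with rules consider r0 h where "r0 \<in> R" "translates h r0 r" | "forwarding_rule r"
    by blast
  then show ?case
  proof cases
    case 1
    then obtain So' where "msr_step per E {r0} So (image_mset unbuf_fact a) So'"
      and sim': "sim_state per E S' So'" and lift: "image_mset lift_fact (image_mset unbuf_fact a) = a"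
      using translated_step_simulation step sim by blast
    then have "msr_step per E R So (image_mset unbuf_fact a) So'"
      using msr_step_singleton_iff[THEN iffD2] \<open>r0 \<in> R\<close> by blast
    then have "msr_run per E R So' (tro @ [image_mset unbuf_fact a])"
      by (rule msr_run.run_step[OF run])
    moreover have "filter (\<lambda>a. a \<noteq> {#}) (tr @ [a])
        = map (image_mset lift_fact) (filter (\<lambda>a. a \<noteq> {#}) (tro @ [image_mset unbuf_fact a]))"
      using trace lift by auto
    ultimately show ?thesis using sim' by blast
  next
    case 2
    then have "a = {#}" and sim': "sim_state per E S' So"
      using forwarding_step_stutters step sim by blast+
    then have "filter (\<lambda>a. a \<noteq> {#}) (tr @ [a])
        = map (image_mset lift_fact) (filter (\<lambda>a. a \<noteq> {#}) tro)"
      using trace by simp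
    then show ?thesis using run sim' by blast
  qed
qed

lemma role_acts_unbuffered:
  assumes pf: "protocol_format \<Sigma> n Renv Rrole" and i: "i \<in> {1..n}" and r0: "r0 \<in> Rrole i"
    and f: "f \<in># acts r0"
  shows "fsym f \<notin> Sin_minus \<Sigma> n \<union> Sout \<Sigma>"
proof -
  have env: "Sin \<Sigma> \<union> Sout \<Sigma> \<subseteq> Senv \<Sigma> \<and> Sact \<Sigma> \<inter> Senv \<Sigma> = {}
      \<and> Senv \<Sigma> \<inter> Sstate \<Sigma> i = {} \<and> symFr \<Sigma> \<in> Sin \<Sigma>"
    using pf i unfolding protocol_format_def by (elim conjE) simp
  have "\<exists>g\<in>#concs r0. fsym g \<in> Sstate \<Sigma> i"
    using pf i r0 unfolding protocol_format_def by blast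
  then have "\<not> is_fresh_rule (symFr \<Sigma>) r0"
    using env unfolding is_fresh_rule_def fresh_rule_def by auto
  then have "syms (acts r0) \<subseteq> Sact \<Sigma>"
    using pf i r0 unfolding protocol_format_def by blast
  then have "fsym f \<in> Sact \<Sigma>"
    using f unfolding syms_def by blast
  then show ?thesis using env unfolding Sin_minus_def by blast
qed

lemma translates_lift_rule: "translates lift_fact r0 (lift_rule r0)"
  by (simp add: translates_def lift_rule_def unbuf_inverse_lift_fact)

lemma translates_buf_rule:
  assumes "\<And>f. f \<in># acts r0 \<Longrightarrow> fsym f \<notin> Sin_minus \<Sigma> n \<union> Sout \<Sigma>"
  shows "translates (buf_fact \<Sigma> n i (thread_id \<Sigma> i r0)) r0 (buf_rule \<Sigma> n i r0)"
  using assms unbuf_inverse_buf_fact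
  by (auto simp: translates_def buf_rule_def buf_fact_def Let_def intro: image_mset_cong)

lemma io_rules_forwarding: "r \<in> io_rules \<Sigma> n i \<Longrightarrow> forwarding_rule r"
  unfolding io_rules_def forwarding_rule_def by (auto simp: unbuf_fact_def subst_fact_def)

lemma R_intf_rules:
  assumes pf: "protocol_format \<Sigma> n Renv Rrole" and r: "r \<in> R_intf \<Sigma> n Renv Rrole"
  shows "(\<exists>r0\<in>R_orig n Renv Rrole. \<exists>h. translates h r0 r) \<or> forwarding_rule r"
  using r unfolding R_intf_def R_io_def
proof (elim UnE)
  assume "r \<in> (\<Union>i\<in>{1..n}. Rrole_intf \<Sigma> n Rrole i)"
  then obtain i r0 where i: "i \<in> {1..n}" and r0: "r0 \<in> Rrole i" and "r = buf_rule \<Sigma> n i r0"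
    by (auto simp: Rrole_intf_def)
  then have "translates (buf_fact \<Sigma> n i (thread_id \<Sigma> i r0)) r0 r"
    using translates_buf_rule role_acts_unbuffered[OF pf i r0] by blast
  then show ?thesis using i r0 by (auto simp: R_orig_def)
qed (auto simp: R_orig_def setup_rules_def io_rules_forwarding intro: translates_lift_rule)

theorem lemma1:
  fixes \<Sigma> :: "'s fsig" and n :: nat
    and Renv :: "('s,'f,'n,'v) rule set" and Rrole :: "nat \<Rightarrow> ('s,'f,'n,'v) rule set"
    and E :: "(('f,'n,'v) trm \<times> ('f,'n,'v) trm) set"
  assumes "protocol_format \<Sigma> n Renv Rrole"
  shows "Tr' (ipersistent (persistent \<Sigma>)) E (R_intf \<Sigma> n Renv Rrole)
           \<subseteq> map (image_mset lift_fact) ` Tr' (persistent \<Sigma>) E (R_orig n Renv Rrole)"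
proof
  fix x assume "x \<in> Tr' (ipersistent (persistent \<Sigma>)) E (R_intf \<Sigma> n Renv Rrole)"
  then obtain tr S where x: "x = filter (\<lambda>a. a \<noteq> {#}) tr"
    and run: "msr_run (ipersistent (persistent \<Sigma>)) E (R_intf \<Sigma> n Renv Rrole) S tr"
    by (auto simp: Tr'_def Tr_def)
  have "\<forall>r\<in>R_intf \<Sigma> n Renv Rrole.
      (\<exists>r0\<in>R_orig n Renv Rrole. \<exists>h. translates h r0 r) \<or> forwarding_rule r"
    using R_intf_rules[OF assms] by blast
  from run_simulation[OF this run] obtain So tro
    where "msr_run (persistent \<Sigma>) E (R_orig n Renv Rrole) So tro"
      and "x = map (image_mset lift_fact) (filter (\<lambda>a. a \<noteq> {#}) tro)"
    using x by blast
  then show "x \<in> map (image_mset lift_fact) ` Tr' (persistent \<Sigma>) E (R_orig n Renv Rrole)"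
    by (auto simp: Tr'_def Tr_def)
qed

end
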